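(* In the setting described in the context, let $c_0,c_1$ be real constants and let $D$ be the torsionless connection $$D\Xi^a=c_0X^a\varrho\otimes\varrho+c_1\big((-1)^{\hat a}\Xi^a\otimes\varrho-\varrho\otimes\Xi^a\big),\qquad a=1,2,3,$$ extended to $\Omega^1\otimes_{\mathcal A}\Omega^1$ by $D(\Xi^a\otimes\Xi^b)=D\Xi^a\otimes\Xi^b+(-1)^{\hat a}\sigma_{12}(\Xi^a\otimes D\Xi^b)$, $\sigma_{12}=\sigma\otimes1$. Let $g:\Omega^1\otimes_{\mathcal A}\Omega^1\to\mathcal A$ be the $\mathcal A$-bilinear ($OSp_h(2/1)$-invariant) metric with $g(\Xi^a\otimes\Xi^b)=g^{ab}$, where $$(g^{ab})=\begin{pmatrix}-\frac h2&0&-1\\0&1&0\\1&0&0\end{pmatrix}.$$ Then $D$ is compatible with $g$, i.e. $d\circ g=(1\otimes g)\circ D$ on $\Omega^1\otimes_{\mathcal A}\Omega^1$, only for the trivial choice $c_0=c_1=0$; for any other choice of $(c_0,c_1)$ the covariant derivative $D$ is not metric.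
   Context: Fix a real (commuting) parameter $h$. $\mathcal A$ is the $\mathbb Z_2$-graded algebra generated by odd $\theta_1,\theta_2$ and even $x$ with relations $[\theta_1,x]=-hx\theta_2$, $\{\theta_1,\theta_2\}=0$, $[\theta_2,x]=0$, $\theta_1^2=-\frac h2(x^2-2\theta_1\theta_2)$, $\theta_2^2=0$. Write $(X^1,X^2,X^3)=(\theta_1,x,\theta_2)$, index parities $\hat1=\hat3=0$, $\hat2=1$, and $\Xi^a=dX^a$, i.e. $\xi_1=d\theta_1$, $\eta=dx$, $\xi_2=d\theta_2$; $\xi_1,\xi_2$ are even and $\eta$ odd. The exterior derivative $d$ is nilpotent and satisfies the graded Leibniz rule. The differential calculus has the relations $\xi_1\wedge\eta-\eta\wedge\xi_1=h\eta\wedge\xi_2$, $\xi_1\wedge\xi_2-\xi_2\wedge\xi_1=h\xi_2\wedge\xi_2$, $\eta\wedge\xi_2=\xi_2\wedge\eta$, $\eta\wedge\eta=-\frac h2\xi_2\wedge\xi_2$; and $[\theta_1,\xi_1]=h(\theta_1\xi_2+x\eta-\theta_2\xi_1-\frac h2\theta_2\xi_2)$, $\{\theta_1,\eta\}=hx\xi_2$, $[\theta_1,\xi_2]=h\theta_2\xi_2$, $[x,\xi_1]=-h\theta_2\eta$, $[x,\eta]=-h\theta_2\xi_2$, $[x,\xi_2]=0$, $[\theta_2,\xi_1]=-h\theta_2\xi_2$, $\{\theta_2,\eta\}=0$, $[\theta_2,\xi_2]=0$. Set $\varrho=\theta_1\xi_2+x\eta-\theta_2\xi_1-\frac h2\theta_2\xi_2$.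 The map $\sigma$ on $\Omega^1\otimes_{\mathcal A}\Omega^1$ is the $\mathcal A$-bilinear map given by $\sigma(\xi_1\otimes\xi_1)=\xi_1\otimes\xi_1-h(\xi_1\otimes\xi_2+\eta\otimes\eta-\xi_2\otimes\xi_1-\frac h2\xi_2\otimes\xi_2)$, $\sigma(\xi_1\otimes\eta)=\eta\otimes\xi_1+h\xi_2\otimes\eta$, $\sigma(\xi_1\otimes\xi_2)=\xi_2\otimes\xi_1+h\xi_2\otimes\xi_2$, $\sigma(\eta\otimes\xi_1)=\xi_1\otimes\eta-h\eta\otimes\xi_2$, $\sigma(\eta\otimes\eta)=-\eta\otimes\eta-h\xi_2\otimes\xi_2$, $\sigma(\eta\otimes\xi_2)=\xi_2\otimes\eta$, $\sigma(\xi_2\otimes\xi_1)=\xi_1\otimes\xi_2-h\xi_2\otimes\xi_2$, $\sigma(\xi_2\otimes\eta)=\eta\otimes\xi_2$, $\sigma(\xi_2\otimes\xi_2)=\xi_2\otimes\xi_2$. The covariant derivative satisfies $D(f\xi)=df\otimes\xi+(-1)^{\hat f}fD\xi$ and $D(\xi f)=(-1)^{\hat\xi}\sigma(\xi\otimes df)+(D\xi)f$ for homogeneous $f\in\mathcal A$, $\xi\in\Omega^1$. The map $1\otimes g:\Omega^1\otimes_{\mathcal A}\Omega^1\otimes_{\mathcal A}\Omega^1\to\Omega^1$ applies $g$ to the last two tensor factors. *)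

theory Defs
  imports Main "HOL-Computational_Algebra.Polynomial"
begin

text \<open>
  Abstract rendering of the h-deformed superplane setting.
  'a : the algebra A (a unital real algebra, not commutative)
  'w : Omega^1 (an A-bimodule),
  't : Omega^1 (x)_A Omega^1,
  'u : Omega^1 (x)_A Omega^1 (x)_A Omega^1.
  Generators: X^1 = theta1, X^2 = x, X^3 = theta2; Xi^a = d X^a.
\<close>

record ('a, 'w, 't, 'u) hcalc =
  th1 :: 'a
  xx  :: 'a
  th2 :: 'a
  Aev :: "'a set"
  Aod :: "'a set"
  lw  :: "'a \<Rightarrow> 'w \<Rightarrow> 'w"
  rw  :: "'w \<Rightarrow> 'a \<Rightarrow> 'w"
  lt  :: "'a \<Rightarrow> 't \<Rightarrow> 't"
  rt  :: "'t \<Rightarrow> 'a \<Rightarrow> 't"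
  lu  :: "'a \<Rightarrow> 'u \<Rightarrow> 'u"
  dd  :: "'a \<Rightarrow> 'w"
  t2  :: "'w \<Rightarrow> 'w \<Rightarrow> 't"
  twt :: "'w \<Rightarrow> 't \<Rightarrow> 'u"
  ttw :: "'t \<Rightarrow> 'w \<Rightarrow> 'u"
  sig :: "'t \<Rightarrow> 't"
  sig12 :: "'u \<Rightarrow> 'u"
  gm  :: "'t \<Rightarrow> 'a"
  g1  :: "'u \<Rightarrow> 'w"
  DD  :: "'t \<Rightarrow> 'u"

definition XX :: "('a,'w,'t,'u,'z) hcalc_scheme \<Rightarrow> nat \<Rightarrow> 'a" where
  "XX C a = (if a = 1 then th1 C else if a = 2 then xx C else th2 C)"

definition Xi :: "('a,'w,'t,'u,'z) hcalc_scheme \<Rightarrow> nat \<Rightarrow> 'w" where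
  "Xi C a = dd C (XX C a)"

definition hat :: "nat \<Rightarrow> nat" where
  "hat a = (if a = 2 then 1 else 0)"

definition polyA :: "'a::real_algebra_1 \<Rightarrow> real poly \<Rightarrow> 'a" where
  "polyA a p = (\<Sum>i\<le>degree p. coeff p i *\<^sub>R a ^ i)"

definition rho :: "('a::real_algebra_1,'w::real_vector,'t,'u,'z) hcalc_scheme \<Rightarrow> real \<Rightarrow> 'w" where
  "rho C h = lw C (th1 C) (Xi C 3) + lw C (xx C) (Xi C 2) - lw C (th2 C) (Xi C 1)
             - (h/2) *\<^sub>R lw C (th2 C) (Xi C 3)"

definition gmat :: "real \<Rightarrow> nat \<Rightarrow> nat \<Rightarrow> real" where
  "gmat h a b =
     (if a = 1 \<and> b = 1 then - h/2
      else if a = 1 \<and> b = 3 then -1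
      else if a = 2 \<and> b = 2 then 1
      else if a = 3 \<and> b = 1 then 1
      else 0)"

definition alg_ok :: "('a::real_algebra_1,'w,'t,'u,'z) hcalc_scheme \<Rightarrow> real \<Rightarrow> bool" where
  "alg_ok C h \<longleftrightarrow>
    (let t1 = th1 C; x = xx C; t2' = th2 C in
      t1 * x - x * t1 = - h *\<^sub>R (x * t2')
    \<and> t1 * t2' + t2' * t1 = 0
    \<and> t2' * x - x * t2' = 0
    \<and> t1 * t1 = - (h/2) *\<^sub>R (x * x - 2 *\<^sub>R (t1 * t2'))
    \<and> t2' * t2' = 0
    \<comment> \<open>Z2-grading\<close>
    \<and> 1 \<in> Aev C \<and> x \<in> Aev C \<and> t1 \<in> Aod C \<and> t2' \<in> Aod C
    \<and> (\<forall>f\<in>Aev C. \<forall>g\<in>Aev C. f * g \<in> Aev C \<and> f + g \<in> Aev C)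
    \<and> (\<forall>f\<in>Aev C. \<forall>g\<in>Aod C. f * g \<in> Aod C \<and> g * f \<in> Aod C)
    \<and> (\<forall>f\<in>Aod C. \<forall>g\<in>Aod C. f * g \<in> Aev C \<and> f + g \<in> Aod C)
    \<and> (\<forall>c. \<forall>f\<in>Aev C. c *\<^sub>R f \<in> Aev C) \<and> (\<forall>c. \<forall>f\<in>Aod C. c *\<^sub>R f \<in> Aod C)
    \<and> Aev C \<inter> Aod C = {0}
    \<and> (\<forall>f. \<exists>f0\<in>Aev C. \<exists>f1\<in>Aod C. f = f0 + f1)
    \<comment> \<open>PBW basis x^n, x^n theta1, x^n theta2, x^n theta1 theta2\<close>
    \<and> (\<forall>f. \<exists>p0 p1 p2 p3. f = polyA x p0 + polyA x p1 * t1 + polyA x p2 * t2'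
                                + polyA x p3 * (t1 * t2'))
    \<and> (\<forall>p0 p1 p2 p3. polyA x p0 + polyA x p1 * t1 + polyA x p2 * t2'
                                + polyA x p3 * (t1 * t2') = 0
                      \<longrightarrow> p0 = 0 \<and> p1 = 0 \<and> p2 = 0 \<and> p3 = 0))"

definition modules_ok :: "('a::real_algebra_1,'w::real_vector,'t::real_vector,'u::real_vector,'z) hcalc_scheme \<Rightarrow> bool" where
  "modules_ok C \<longleftrightarrow>
    \<comment> \<open>Omega^1 is an A-bimodule\<close>
      (\<forall>f g w. lw C (f * g) w = lw C f (lw C g w)) \<and> (\<forall>w. lw C 1 w = w)
    \<and> (\<forall>f g w. rw C w (f * g) = rw C (rw C w f) g) \<and> (\<forall>w. rw C w 1 = w)
    \<and> (\<forall>f g w. lw C f (rw C w g) = rw C (lw C f w) g)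
    \<and> (\<forall>w. linear (\<lambda>f. lw C f w)) \<and> (\<forall>f. linear (lw C f))
    \<and> (\<forall>w. linear (rw C w)) \<and> (\<forall>f. linear (\<lambda>w. rw C w f))
    \<comment> \<open>Omega^1 (x) Omega^1 is an A-bimodule\<close>
    \<and> (\<forall>f g t. lt C (f * g) t = lt C f (lt C g t)) \<and> (\<forall>t. lt C 1 t = t)
    \<and> (\<forall>f g t. rt C t (f * g) = rt C (rt C t f) g) \<and> (\<forall>t. rt C t 1 = t)
    \<and> (\<forall>f g t. lt C f (rt C t g) = rt C (lt C f t) g)
    \<and> (\<forall>t. linear (\<lambda>f. lt C f t)) \<and> (\<forall>f. linear (lt C f))
    \<and> (\<forall>t. linear (rt C t)) \<and> (\<forall>f. linear (\<lambda>t. rt C t f))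
    \<comment> \<open>triple tensor product is a left A-module\<close>
    \<and> (\<forall>f g u. lu C (f * g) u = lu C f (lu C g u)) \<and> (\<forall>u. lu C 1 u = u)
    \<and> (\<forall>u. linear (\<lambda>f. lu C f u)) \<and> (\<forall>f. linear (lu C f))
    \<comment> \<open>Omega^1 is a free left A-module with basis xi1, eta, xi2\<close>
    \<and> (\<forall>w. \<exists>f1 f2 f3. w = lw C f1 (Xi C 1) + lw C f2 (Xi C 2) + lw C f3 (Xi C 3))
    \<and> (\<forall>f1 f2 f3. lw C f1 (Xi C 1) + lw C f2 (Xi C 2) + lw C f3 (Xi C 3) = 0
                   \<longrightarrow> f1 = 0 \<and> f2 = 0 \<and> f3 = 0)
    \<comment> \<open>the tensor product over A\<close>
    \<and> (\<forall>w. linear (t2 C w)) \<and> (\<forall>w'. linear (\<lambda>w. t2 C w w'))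
    \<and> (\<forall>w f w'. t2 C (rw C w f) w' = t2 C w (lw C f w'))
    \<and> (\<forall>w f w'. t2 C (lw C f w) w' = lt C f (t2 C w w'))
    \<and> (\<forall>w f w'. t2 C w (rw C w' f) = rt C (t2 C w w') f)
    \<and> (\<forall>t. \<exists>ps. t = (\<Sum>(w, w')\<leftarrow>ps. t2 C w w'))
    \<comment> \<open>triple tensors: w (x) t and t (x) w\<close>
    \<and> (\<forall>w. linear (twt C w)) \<and> (\<forall>t. linear (\<lambda>w. twt C w t))
    \<and> (\<forall>w. linear (ttw C w)) \<and> (\<forall>t. linear (\<lambda>w. ttw C w t))
    \<and> (\<forall>f w t. twt C (lw C f w) t = lu C f (twt C w t))
    \<and> (\<forall>f w t. twt C (rw C w f) t = twt C w (lt C f t))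
    \<and> (\<forall>f w t. ttw C (lt C f t) w = lu C f (ttw C t w))
    \<and> (\<forall>f w t. ttw C (rt C t f) w = ttw C t (lw C f w))
    \<and> (\<forall>a b c. ttw C (t2 C a b) c = twt C a (t2 C b c))
    \<comment> \<open>exterior derivative: real-linear graded derivation\<close>
    \<and> linear (dd C)
    \<and> (\<forall>f\<in>Aev C. \<forall>g. dd C (f * g) = rw C (dd C f) g + lw C f (dd C g))
    \<and> (\<forall>f\<in>Aod C. \<forall>g. dd C (f * g) = rw C (dd C f) g - lw C f (dd C g))"

definition calc_ok :: "('a::real_algebra_1,'w::real_vector,'t,'u,'z) hcalc_scheme \<Rightarrow> real \<Rightarrow> bool" where
  "calc_ok C h \<longleftrightarrow>
    (let t1 = th1 C; x = xx C; t2' = th2 C; x1 = Xi C 1; e = Xi C 2; x2 = Xi C 3;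
         L = lw C; R = rw C in
      L t1 x1 - R x1 t1 = h *\<^sub>R rho C h
    \<and> L t1 e + R e t1 = h *\<^sub>R L x x2
    \<and> L t1 x2 - R x2 t1 = h *\<^sub>R L t2' x2
    \<and> L x x1 - R x1 x = - h *\<^sub>R L t2' e
    \<and> L x e - R e x = - h *\<^sub>R L t2' x2
    \<and> L x x2 - R x2 x = 0
    \<and> L t2' x1 - R x1 t2' = - h *\<^sub>R L t2' x2
    \<and> L t2' e + R e t2' = 0
    \<and> L t2' x2 - R x2 t2' = 0)"

definition sigma_ok :: "('a::real_algebra_1,'w::real_vector,'t::real_vector,'u::real_vector,'z) hcalc_scheme \<Rightarrow> real \<Rightarrow> bool" where
  "sigma_ok C h \<longleftrightarrow>
    (let x1 = Xi C 1; e = Xi C 2; x2 = Xi C 3; T = t2 C; S = sig C in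
      linear S
    \<and> (\<forall>f t. S (lt C f t) = lt C f (S t)) \<and> (\<forall>f t. S (rt C t f) = rt C (S t) f)
    \<and> S (T x1 x1) = T x1 x1 - h *\<^sub>R (T x1 x2 + T e e - T x2 x1 - (h/2) *\<^sub>R T x2 x2)
    \<and> S (T x1 e) = T e x1 + h *\<^sub>R T x2 e
    \<and> S (T x1 x2) = T x2 x1 + h *\<^sub>R T x2 x2
    \<and> S (T e x1) = T x1 e - h *\<^sub>R T e x2
    \<and> S (T e e) = - T e e - h *\<^sub>R T x2 x2
    \<and> S (T e x2) = T x2 e
    \<and> S (T x2 x1) = T x1 x2 - h *\<^sub>R T x2 x2
    \<and> S (T x2 e) = T e x2
    \<and> S (T x2 x2) = T x2 x2
    \<and> linear (sig12 C) \<and> (\<forall>t w. sig12 C (ttw C t w) = ttw C (S t) w))"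

definition metric_ok :: "('a::real_algebra_1,'w::real_vector,'t::real_vector,'u::real_vector,'z) hcalc_scheme \<Rightarrow> real \<Rightarrow> bool" where
  "metric_ok C h \<longleftrightarrow>
      linear (gm C)
    \<and> (\<forall>f t. gm C (lt C f t) = f * gm C t) \<and> (\<forall>f t. gm C (rt C t f) = gm C t * f)
    \<and> (\<forall>a\<in>{1,2,3}. \<forall>b\<in>{1,2,3}. gm C (t2 C (Xi C a) (Xi C b)) = of_real (gmat h a b))
    \<and> linear (g1 C) \<and> (\<forall>w t. g1 C (twt C w t) = rw C w (gm C t))"

definition DXi :: "('a::real_algebra_1,'w::real_vector,'t::real_vector,'u,'z) hcalc_scheme \<Rightarrow> real \<Rightarrow> real \<Rightarrow> real \<Rightarrow> nat \<Rightarrow> 't" where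
  "DXi C h c0 c1 a =
     c0 *\<^sub>R lt C (XX C a) (t2 C (rho C h) (rho C h))
     + c1 *\<^sub>R (((-1::real) ^ hat a) *\<^sub>R t2 C (Xi C a) (rho C h) - t2 C (rho C h) (Xi C a))"

definition connection_ok :: "('a::real_algebra_1,'w::real_vector,'t::real_vector,'u::real_vector,'z) hcalc_scheme \<Rightarrow> real \<Rightarrow> real \<Rightarrow> real \<Rightarrow> bool" where
  "connection_ok C h c0 c1 \<longleftrightarrow>
      linear (DD C)
    \<and> (\<forall>a\<in>{1,2,3}. \<forall>b\<in>{1,2,3}.
         DD C (t2 C (Xi C a) (Xi C b)) =
           ttw C (DXi C h c0 c1 a) (Xi C b)
           + ((-1::real) ^ hat a) *\<^sub>R sig12 C (twt C (Xi C a) (DXi C h c0 c1 b)))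
    \<and> (\<forall>f\<in>Aev C. \<forall>t. DD C (lt C f t) = twt C (dd C f) t + lu C f (DD C t))
    \<and> (\<forall>f\<in>Aod C. \<forall>t. DD C (lt C f t) = twt C (dd C f) t - lu C f (DD C t))"

definition metric_compatible :: "('a,'w,'t,'u,'z) hcalc_scheme \<Rightarrow> bool" where
  "metric_compatible C \<longleftrightarrow> (\<forall>t. dd C (gm C t) = g1 C (DD C t))"

end

theory Submission
  imports Defs
begin

(* If c0 = c1 = 0, every basis tensor Xi^a (x) Xi^b is parallel and g^ab is a real constant,
   so by the graded Leibniz rule both sides of d (g t) = (1 (x) g) (D t) equal g^ab df on
   t = f Xi^a (x) Xi^b, and these tensors generate Omega^1 (x)_A Omega^1 additively.
   Conversely g^32 = 0, so compatibility forces (1 (x) g) D (xi2 (x) eta) = 0. Moving all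
   coefficients to the left, its xi2-component is c1 x - 2 c0 x theta1 theta2, and the
   PBW basis of A gives c0 = c1 = 0. *)

lemmas linear_simps = linear_add linear_diff linear_scale linear_neg linear_0

lemma polyA_monom_1: "polyA a (monom c 1) = c *\<^sub>R a"
  by (cases "c = 0") (auto simp: polyA_def degree_monom_eq coeff_monom)

locale superplane_calculus =
  fixes C :: "('a::real_algebra_1, 'w::real_vector, 't::real_vector, 'u::real_vector) hcalc"
    and h :: real
  assumes alg: "alg_ok C h" and modules: "modules_ok C" and calc: "calc_ok C h"
    and sigma: "sigma_ok C h" and metric: "metric_ok C h"
begin

(* Otherwise simp turns Xi C 1 into Xi C (Suc 0) and the rules about \<xi>\<^sub>1 no longer fire. *)
declare One_nat_def [simp del]

abbreviation "\<theta>\<^sub>1 \<equiv> th1 C"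
abbreviation "x \<equiv> xx C"
abbreviation "\<theta>\<^sub>2 \<equiv> th2 C"
abbreviation "\<xi>\<^sub>1 \<equiv> Xi C 1"
abbreviation "\<eta> \<equiv> Xi C 2"
abbreviation "\<xi>\<^sub>2 \<equiv> Xi C 3"
abbreviation "\<rho> \<equiv> rho C h"

abbreviation lmult (infixr \<open>\<triangleright>\<close> 75) where "f \<triangleright> w \<equiv> lw C f w"
abbreviation rmult (infixl \<open>\<triangleleft>\<close> 75) where "w \<triangleleft> f \<equiv> rw C w f"
abbreviation tensor (infixr \<open>\<otimes>\<close> 70) where "w \<otimes> w' \<equiv> t2 C w w'"

lemma algebra_relations:
  shows th1_x_relation: "\<theta>\<^sub>1 * x - x * \<theta>\<^sub>1 = - h *\<^sub>R (x * \<theta>\<^sub>2)"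
    and th1_th2_relation: "\<theta>\<^sub>1 * \<theta>\<^sub>2 + \<theta>\<^sub>2 * \<theta>\<^sub>1 = 0"
    and th2_x_relation: "\<theta>\<^sub>2 * x - x * \<theta>\<^sub>2 = 0"
    and th2_square: "\<theta>\<^sub>2 * \<theta>\<^sub>2 = 0"
    and even_odd_decomposition: "\<exists>f\<^sub>0\<in>Aev C. \<exists>f\<^sub>1\<in>Aod C. f = f\<^sub>0 + f\<^sub>1"
    and pbw_independent: "polyA x p\<^sub>0 + polyA x p\<^sub>1 * \<theta>\<^sub>1 + polyA x p\<^sub>2 * \<theta>\<^sub>2
        + polyA x p\<^sub>3 * (\<theta>\<^sub>1 * \<theta>\<^sub>2) = 0 \<Longrightarrow> p\<^sub>0 = 0 \<and> p\<^sub>1 = 0 \<and> p\<^sub>2 = 0 \<and> p\<^sub>3 = 0"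
  using alg unfolding alg_ok_def Let_def by (blast+)

lemma module_axioms:
  shows lw_linear_left: "linear (\<lambda>f. f \<triangleright> w)"
    and lw_linear_right: "linear (lw C f)"
    and rw_linear_left: "linear (\<lambda>w. w \<triangleleft> f)"
    and rw_linear_right: "linear (rw C w)"
    and lt_linear_left: "linear (\<lambda>f. lt C f t)"
    and lt_linear_right: "linear (lt C f)"
    and lu_linear_right: "linear (lu C f)"
    and tensor_linear_left: "linear (\<lambda>w. w \<otimes> w')"
    and tensor_linear_right: "linear (t2 C w)"
    and twt_linear_left: "linear (\<lambda>w. twt C w t)"
    and twt_linear_right: "linear (twt C w)"
    and ttw_linear_left: "linear (\<lambda>t. ttw C t w)"
    and dd_linear: "linear (dd C)"
    and lw_mult: "(f * g) \<triangleright> w = f \<triangleright> g \<triangleright> w"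
    and rw_one: "w \<triangleleft> 1 = w"
    and lw_rw_assoc: "f \<triangleright> (w \<triangleleft> g) = (f \<triangleright> w) \<triangleleft> g"
    and one_form_span: "\<exists>f\<^sub>1 f\<^sub>2 f\<^sub>3. w = f\<^sub>1 \<triangleright> \<xi>\<^sub>1 + f\<^sub>2 \<triangleright> \<eta> + f\<^sub>3 \<triangleright> \<xi>\<^sub>2"
    and one_form_free: "f\<^sub>1 \<triangleright> \<xi>\<^sub>1 + f\<^sub>2 \<triangleright> \<eta> + f\<^sub>3 \<triangleright> \<xi>\<^sub>2 = 0 \<Longrightarrow> f\<^sub>1 = 0 \<and> f\<^sub>2 = 0 \<and> f\<^sub>3 = 0"
    and tensor_rw: "(w \<triangleleft> f) \<otimes> w' = w \<otimes> (f \<triangleright> w')"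
    and tensor_lw: "(f \<triangleright> w) \<otimes> w' = lt C f (w \<otimes> w')"
    and tensor_sum_simple: "\<exists>ps. t = (\<Sum>(w, w')\<leftarrow>ps. w \<otimes> w')"
    and twt_lw: "twt C (f \<triangleright> w) t = lu C f (twt C w t)"
    and twt_rw: "twt C (w \<triangleleft> f) t = twt C w (lt C f t)"
    and ttw_lt: "ttw C (lt C f t) w = lu C f (ttw C t w)"
    and ttw_tensor: "ttw C (w \<otimes> w') w'' = twt C w (w' \<otimes> w'')"
  using modules unfolding modules_ok_def by simp_all

lemma braiding_axioms:
  shows sig_linear: "linear (sig C)"
    and sig12_linear: "linear (sig12 C)"
    and sig_lt: "sig C (lt C f t) = lt C f (sig C t)"
    and sig_xi2_xi1: "sig C (\<xi>\<^sub>2 \<otimes> \<xi>\<^sub>1) = \<xi>\<^sub>1 \<otimes> \<xi>\<^sub>2 - h *\<^sub>R (\<xi>\<^sub>2 \<otimes> \<xi>\<^sub>2)"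
    and sig_xi2_eta: "sig C (\<xi>\<^sub>2 \<otimes> \<eta>) = \<eta> \<otimes> \<xi>\<^sub>2"
    and sig_xi2_xi2: "sig C (\<xi>\<^sub>2 \<otimes> \<xi>\<^sub>2) = \<xi>\<^sub>2 \<otimes> \<xi>\<^sub>2"
    and sig12_ttw: "sig12 C (ttw C t w) = ttw C (sig C t) w"
  using sigma unfolding sigma_ok_def Let_def by simp_all

lemma metric_axioms:
  shows gm_linear: "linear (gm C)"
    and g1_linear: "linear (g1 C)"
    and gm_lt: "gm C (lt C f t) = f * gm C t"
    and gm_basis: "a \<in> {1,2,3} \<Longrightarrow> b \<in> {1,2,3} \<Longrightarrow> gm C (Xi C a \<otimes> Xi C b) = of_real (gmat h a b)"
    and g1_twt: "g1 C (twt C w t) = w \<triangleleft> gm C t"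
  using metric unfolding metric_ok_def by (blast+)

lemmas [simp] =
  linear_simps[OF lw_linear_left] linear_simps[OF lw_linear_right]
  linear_simps[OF rw_linear_left] linear_simps[OF rw_linear_right]
  linear_simps[OF lt_linear_left] linear_simps[OF lt_linear_right]
  linear_simps[OF lu_linear_right]
  linear_simps[OF tensor_linear_left] linear_simps[OF tensor_linear_right]
  linear_simps[OF twt_linear_left] linear_simps[OF twt_linear_right]
  linear_simps[OF ttw_linear_left]
  linear_simps[OF dd_linear] linear_simps[OF sig_linear] linear_simps[OF sig12_linear]
  linear_simps[OF gm_linear] linear_simps[OF g1_linear]

lemma right_mult_basis:
  shows xi2_rmult_th1: "\<xi>\<^sub>2 \<triangleleft> \<theta>\<^sub>1 = \<theta>\<^sub>1 \<triangleright> \<xi>\<^sub>2 - h *\<^sub>R (\<theta>\<^sub>2 \<triangleright> \<xi>\<^sub>2)"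
    and xi2_rmult_x: "\<xi>\<^sub>2 \<triangleleft> x = x \<triangleright> \<xi>\<^sub>2"
    and xi2_rmult_th2: "\<xi>\<^sub>2 \<triangleleft> \<theta>\<^sub>2 = \<theta>\<^sub>2 \<triangleright> \<xi>\<^sub>2"
    and eta_rmult_x: "\<eta> \<triangleleft> x = x \<triangleright> \<eta> + h *\<^sub>R (\<theta>\<^sub>2 \<triangleright> \<xi>\<^sub>2)"
    and eta_rmult_th2: "\<eta> \<triangleleft> \<theta>\<^sub>2 = - (\<theta>\<^sub>2 \<triangleright> \<eta>)"
    and xi1_rmult_th2: "\<xi>\<^sub>1 \<triangleleft> \<theta>\<^sub>2 = \<theta>\<^sub>2 \<triangleright> \<xi>\<^sub>1 + h *\<^sub>R (\<theta>\<^sub>2 \<triangleright> \<xi>\<^sub>2)"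
  using calc unfolding calc_ok_def Let_def by (auto simp: algebra_simps eq_neg_iff_add_eq_0)

lemma th2_products:
  shows th2_th1_x: "\<theta>\<^sub>2 * (\<theta>\<^sub>1 * x) = - (x * (\<theta>\<^sub>1 * \<theta>\<^sub>2))"
    and th2_x_x: "\<theta>\<^sub>2 * (x * x) = x * (x * \<theta>\<^sub>2)"
    and th2_x_th2: "\<theta>\<^sub>2 * (x * \<theta>\<^sub>2) = 0"
    and th2_th2: "\<theta>\<^sub>2 * (\<theta>\<^sub>2 * f) = 0"
proof -
  have th2_x: "\<theta>\<^sub>2 * x = x * \<theta>\<^sub>2" using th2_x_relation by simp
  have th1_x: "\<theta>\<^sub>1 * x = x * \<theta>\<^sub>1 - h *\<^sub>R (x * \<theta>\<^sub>2)"
    using th1_x_relation by (simp add: algebra_simps)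
  show th2_th2: "\<theta>\<^sub>2 * (\<theta>\<^sub>2 * f) = 0" for f
    by (simp add: mult.assoc[symmetric] th2_square)
  have "\<theta>\<^sub>2 * (\<theta>\<^sub>1 * x) = - (\<theta>\<^sub>1 * (\<theta>\<^sub>2 * x))"
    using th1_th2_relation by (simp add: mult.assoc[symmetric] add_eq_0_iff2)
  also have "\<dots> = - ((x * \<theta>\<^sub>1 - h *\<^sub>R (x * \<theta>\<^sub>2)) * \<theta>\<^sub>2)"
    by (simp add: th2_x th1_x mult.assoc[symmetric])
  also have "\<dots> = - (x * (\<theta>\<^sub>1 * \<theta>\<^sub>2))"
    by (simp add: algebra_simps th2_square)
  finally show "\<theta>\<^sub>2 * (\<theta>\<^sub>1 * x) = - (x * (\<theta>\<^sub>1 * \<theta>\<^sub>2))" .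
  show "\<theta>\<^sub>2 * (x * x) = x * (x * \<theta>\<^sub>2)"
    by (simp add: mult.assoc[symmetric] th2_x) (simp add: mult.assoc th2_x)
  show "\<theta>\<^sub>2 * (x * \<theta>\<^sub>2) = 0"
    by (simp add: mult.assoc[symmetric] th2_x) (simp add: mult.assoc th2_square)
qed

lemma metric_xi2_eta: "gm C (\<xi>\<^sub>2 \<otimes> \<eta>) = 0"
  by (simp add: gm_basis gmat_def)

lemma metric_rho_eta: "gm C (\<rho> \<otimes> \<eta>) = x"
  by (simp add: rho_def tensor_lw gm_lt gm_basis gmat_def)

lemma xi2_tensor_rho:
  "\<xi>\<^sub>2 \<otimes> \<rho> = lt C \<theta>\<^sub>1 (\<xi>\<^sub>2 \<otimes> \<xi>\<^sub>2) + lt C x (\<xi>\<^sub>2 \<otimes> \<eta>) - lt C \<theta>\<^sub>2 (\<xi>\<^sub>2 \<otimes> \<xi>\<^sub>1)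
     - h *\<^sub>R lt C \<theta>\<^sub>2 (\<xi>\<^sub>2 \<otimes> \<xi>\<^sub>2) - (h / 2) *\<^sub>R lt C \<theta>\<^sub>2 (\<xi>\<^sub>2 \<otimes> \<xi>\<^sub>2)"
  by (simp add: rho_def tensor_rw[symmetric] right_mult_basis tensor_lw algebra_simps)

lemma braiding_xi2_rho: "sig C (\<xi>\<^sub>2 \<otimes> \<rho>) = \<rho> \<otimes> \<xi>\<^sub>2"
  unfolding xi2_tensor_rho by (simp add: rho_def tensor_lw sig_lt sig_xi2_xi1 sig_xi2_eta sig_xi2_xi2 algebra_simps)

lemma metric_xi2_rho: "gm C (\<xi>\<^sub>2 \<otimes> \<rho>) = - \<theta>\<^sub>2"
  unfolding xi2_tensor_rho by (simp add: gm_lt gm_basis gmat_def)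

lemma th2_rho_x: "\<theta>\<^sub>2 \<triangleright> (\<rho> \<triangleleft> x) = (x * (x * \<theta>\<^sub>2)) \<triangleright> \<eta> - (x * (\<theta>\<^sub>1 * \<theta>\<^sub>2)) \<triangleright> \<xi>\<^sub>2"
  by (simp add: rho_def lw_rw_assoc[symmetric] right_mult_basis lw_mult[symmetric] th2_products th2_square)

lemma x_rho_th2: "x \<triangleright> (\<rho> \<triangleleft> \<theta>\<^sub>2) = (x * (\<theta>\<^sub>1 * \<theta>\<^sub>2)) \<triangleright> \<xi>\<^sub>2 - (x * (x * \<theta>\<^sub>2)) \<triangleright> \<eta>"
  by (simp add: rho_def lw_rw_assoc[symmetric] right_mult_basis lw_mult[symmetric] th2_products th2_square)

lemma x_and_x_th1_th2_independent:
  assumes "a *\<^sub>R x + b *\<^sub>R (x * (\<theta>\<^sub>1 * \<theta>\<^sub>2)) = 0"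
  shows "a = 0 \<and> b = 0"
proof -
  have "polyA x (monom a 1) + polyA x 0 * \<theta>\<^sub>1 + polyA x 0 * \<theta>\<^sub>2
      + polyA x (monom b 1) * (\<theta>\<^sub>1 * \<theta>\<^sub>2) = 0"
    using assms by (simp add: polyA_monom_1 polyA_def[of _ 0])
  then have "monom a 1 = 0 \<and> monom b 1 = (0 :: real poly)"
    using pbw_independent by blast
  then show ?thesis by simp
qed

lemma tensor_induct [case_names zero add basis]:
  assumes zero: "P 0" and add: "\<And>s t. P s \<Longrightarrow> P t \<Longrightarrow> P (s + t)"
    and basis: "\<And>f a b. a \<in> {1,2,3} \<Longrightarrow> b \<in> {1,2,3} \<Longrightarrow> P (lt C f (Xi C a \<otimes> Xi C b))"
  shows "P t"
proof -
  have basis_right: "P (w \<otimes> Xi C b)" if "b \<in> {1,2,3}" for w b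
  proof -
    obtain f\<^sub>1 f\<^sub>2 f\<^sub>3 where "w = f\<^sub>1 \<triangleright> \<xi>\<^sub>1 + f\<^sub>2 \<triangleright> \<eta> + f\<^sub>3 \<triangleright> \<xi>\<^sub>2"
      using one_form_span by blast
    then have "w \<otimes> Xi C b = lt C f\<^sub>1 (\<xi>\<^sub>1 \<otimes> Xi C b) + lt C f\<^sub>2 (\<eta> \<otimes> Xi C b) + lt C f\<^sub>3 (\<xi>\<^sub>2 \<otimes> Xi C b)"
      by (simp add: tensor_lw)
    then show ?thesis using add basis that by simp
  qed
  have simple: "P (w \<otimes> w')" for w w'
  proof -
    obtain f\<^sub>1 f\<^sub>2 f\<^sub>3 where "w' = f\<^sub>1 \<triangleright> \<xi>\<^sub>1 + f\<^sub>2 \<triangleright> \<eta> + f\<^sub>3 \<triangleright> \<xi>\<^sub>2"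
      using one_form_span by blast
    then have "w \<otimes> w' = (w \<triangleleft> f\<^sub>1) \<otimes> \<xi>\<^sub>1 + (w \<triangleleft> f\<^sub>2) \<otimes> \<eta> + (w \<triangleleft> f\<^sub>3) \<otimes> \<xi>\<^sub>2"
      by (simp add: tensor_rw)
    then show ?thesis using add basis_right by simp
  qed
  obtain ps where "t = (\<Sum>(w, w')\<leftarrow>ps. w \<otimes> w')"
    using tensor_sum_simple by blast
  moreover have "P (\<Sum>(w, w')\<leftarrow>ps. w \<otimes> w')"
    by (induction ps) (auto intro: zero add simple)
  ultimately show ?thesis by simp
qed

end

locale superplane_connection = superplane_calculus +
  fixes c0 c1 :: real
  assumes connection: "connection_ok C h c0 c1"
begin

abbreviation "D\<Xi> a \<equiv> DXi C h c0 c1 a"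

lemma connection_axioms:
  shows DD_linear: "linear (DD C)"
    and DD_basis: "a \<in> {1,2,3} \<Longrightarrow> b \<in> {1,2,3} \<Longrightarrow> DD C (Xi C a \<otimes> Xi C b)
          = ttw C (D\<Xi> a) (Xi C b) + ((-1::real) ^ hat a) *\<^sub>R sig12 C (twt C (Xi C a) (D\<Xi> b))"
    and DD_lt_even: "f \<in> Aev C \<Longrightarrow> DD C (lt C f t) = twt C (dd C f) t + lu C f (DD C t)"
    and DD_lt_odd: "f \<in> Aod C \<Longrightarrow> DD C (lt C f t) = twt C (dd C f) t - lu C f (DD C t)"
  using connection unfolding connection_ok_def by (blast+)

lemmas [simp] = linear_simps[OF DD_linear]

lemma DXi_xi2: "D\<Xi> 3 = c0 *\<^sub>R lt C \<theta>\<^sub>2 (\<rho> \<otimes> \<rho>) + c1 *\<^sub>R (\<xi>\<^sub>2 \<otimes> \<rho> - \<rho> \<otimes> \<xi>\<^sub>2)"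
  by (simp add: DXi_def XX_def hat_def)

lemma DXi_eta: "D\<Xi> 2 = c0 *\<^sub>R lt C x (\<rho> \<otimes> \<rho>) - c1 *\<^sub>R (\<eta> \<otimes> \<rho> + \<rho> \<otimes> \<eta>)"
  by (simp add: DXi_def XX_def hat_def algebra_simps)

lemma contract_DXi_xi2_eta:
  "g1 C (ttw C (D\<Xi> 3) \<eta>) = c0 *\<^sub>R ((\<theta>\<^sub>2 \<triangleright> \<rho>) \<triangleleft> x) + c1 *\<^sub>R (x \<triangleright> \<xi>\<^sub>2)"
  by (simp add: DXi_xi2 ttw_lt ttw_tensor twt_lw[symmetric] g1_twt metric_rho_eta metric_xi2_eta
      xi2_rmult_x)

lemma contract_braided_xi2_DXi_eta:
  "g1 C (sig12 C (twt C \<xi>\<^sub>2 (D\<Xi> 2))) = - c0 *\<^sub>R ((x \<triangleright> \<rho>) \<triangleleft> \<theta>\<^sub>2) - c1 *\<^sub>R (\<theta>\<^sub>2 \<triangleright> \<eta>)"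
proof -
  have "twt C \<xi>\<^sub>2 (lt C x (\<rho> \<otimes> \<rho>)) = ttw C (lt C x (\<xi>\<^sub>2 \<otimes> \<rho>)) \<rho>"
    by (simp add: twt_rw[symmetric] xi2_rmult_x twt_lw ttw_lt ttw_tensor)
  also have "sig12 C \<dots> = ttw C (lt C x (\<rho> \<otimes> \<xi>\<^sub>2)) \<rho>"
    by (simp add: sig12_ttw sig_lt braiding_xi2_rho)
  also have "\<dots> = twt C (x \<triangleright> \<rho>) (\<xi>\<^sub>2 \<otimes> \<rho>)"
    by (simp add: ttw_lt ttw_tensor twt_lw)
  finally have x_rho_rho: "g1 C (sig12 C (twt C \<xi>\<^sub>2 (lt C x (\<rho> \<otimes> \<rho>)))) = - ((x \<triangleright> \<rho>) \<triangleleft> \<theta>\<^sub>2)"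
    by (simp add: g1_twt metric_xi2_rho)
  have "twt C \<xi>\<^sub>2 (\<eta> \<otimes> \<rho>) = ttw C (\<xi>\<^sub>2 \<otimes> \<eta>) \<rho>"
    by (simp add: ttw_tensor)
  also have "sig12 C \<dots> = ttw C (\<eta> \<otimes> \<xi>\<^sub>2) \<rho>"
    by (simp add: sig12_ttw sig_xi2_eta)
  also have "\<dots> = twt C \<eta> (\<xi>\<^sub>2 \<otimes> \<rho>)"
    by (simp add: ttw_tensor)
  finally have eta_rho: "g1 C (sig12 C (twt C \<xi>\<^sub>2 (\<eta> \<otimes> \<rho>))) = \<theta>\<^sub>2 \<triangleright> \<eta>"
    by (simp add: g1_twt metric_xi2_rho eta_rmult_th2)
  have "twt C \<xi>\<^sub>2 (\<rho> \<otimes> \<eta>) = ttw C (\<xi>\<^sub>2 \<otimes> \<rho>) \<eta>"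
    by (simp add: ttw_tensor)
  also have "sig12 C \<dots> = ttw C (\<rho> \<otimes> \<xi>\<^sub>2) \<eta>"
    by (simp add: sig12_ttw braiding_xi2_rho)
  also have "\<dots> = twt C \<rho> (\<xi>\<^sub>2 \<otimes> \<eta>)"
    by (simp add: ttw_tensor)
  finally have rho_eta: "g1 C (sig12 C (twt C \<xi>\<^sub>2 (\<rho> \<otimes> \<eta>))) = 0"
    by (simp add: g1_twt metric_xi2_eta)
  show ?thesis
    by (simp add: DXi_eta x_rho_rho eta_rho rho_eta)
qed

lemma contract_D_xi2_eta:
  "g1 C (DD C (\<xi>\<^sub>2 \<otimes> \<eta>)) = ((2 * c0) *\<^sub>R (x * (x * \<theta>\<^sub>2)) - c1 *\<^sub>R \<theta>\<^sub>2) \<triangleright> \<eta>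
     + (c1 *\<^sub>R x - (2 * c0) *\<^sub>R (x * (\<theta>\<^sub>1 * \<theta>\<^sub>2))) \<triangleright> \<xi>\<^sub>2"
proof -
  have double: "(c0 * 2) *\<^sub>R v = c0 *\<^sub>R v + c0 *\<^sub>R v" for v :: "'v::real_vector"
    by (simp add: scaleR_add_left[symmetric])
  have "DD C (\<xi>\<^sub>2 \<otimes> \<eta>) = ttw C (D\<Xi> 3) \<eta> + sig12 C (twt C \<xi>\<^sub>2 (D\<Xi> 2))"
    using DD_basis[of 3 2] by (simp add: hat_def)
  then have "g1 C (DD C (\<xi>\<^sub>2 \<otimes> \<eta>)) = c0 *\<^sub>R (\<theta>\<^sub>2 \<triangleright> (\<rho> \<triangleleft> x)) + c1 *\<^sub>R (x \<triangleright> \<xi>\<^sub>2)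
      - c0 *\<^sub>R (x \<triangleright> (\<rho> \<triangleleft> \<theta>\<^sub>2)) - c1 *\<^sub>R (\<theta>\<^sub>2 \<triangleright> \<eta>)"
    by (simp add: contract_DXi_xi2_eta contract_braided_xi2_DXi_eta lw_rw_assoc)
  also have "\<dots> = ((2 * c0) *\<^sub>R (x * (x * \<theta>\<^sub>2)) - c1 *\<^sub>R \<theta>\<^sub>2) \<triangleright> \<eta>
     + (c1 *\<^sub>R x - (2 * c0) *\<^sub>R (x * (\<theta>\<^sub>1 * \<theta>\<^sub>2))) \<triangleright> \<xi>\<^sub>2"
    by (simp add: th2_rho_x x_rho_th2 algebra_simps double)
  finally show ?thesis .
qed

lemma metric_compatible_imp_trivial:
  assumes "metric_compatible C"
  shows "c0 = 0 \<and> c1 = 0"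
proof -
  have "dd C (gm C (\<xi>\<^sub>2 \<otimes> \<eta>)) = g1 C (DD C (\<xi>\<^sub>2 \<otimes> \<eta>))"
    using assms unfolding metric_compatible_def by blast
  then have "0 \<triangleright> \<xi>\<^sub>1 + ((2 * c0) *\<^sub>R (x * (x * \<theta>\<^sub>2)) - c1 *\<^sub>R \<theta>\<^sub>2) \<triangleright> \<eta>
      + (c1 *\<^sub>R x - (2 * c0) *\<^sub>R (x * (\<theta>\<^sub>1 * \<theta>\<^sub>2))) \<triangleright> \<xi>\<^sub>2 = 0"
    by (simp add: metric_xi2_eta contract_D_xi2_eta)
  then have "c1 *\<^sub>R x - (2 * c0) *\<^sub>R (x * (\<theta>\<^sub>1 * \<theta>\<^sub>2)) = 0"
    using one_form_free by blast
  then have "c1 = 0 \<and> - (2 * c0) = 0"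
    using x_and_x_th1_th2_independent[of c1 "- (2 * c0)"] by simp
  then show ?thesis by simp
qed

lemma DD_lt_parallel:
  assumes "DD C t = 0"
  shows "DD C (lt C f t) = twt C (dd C f) t"
proof -
  obtain f\<^sub>0 f\<^sub>1 where "f\<^sub>0 \<in> Aev C" "f\<^sub>1 \<in> Aod C" "f = f\<^sub>0 + f\<^sub>1"
    using even_odd_decomposition by blast
  then show ?thesis using assms by (simp add: DD_lt_even DD_lt_odd)
qed

lemma metric_compatible_if_basis_parallel:
  assumes parallel: "\<And>a b. a \<in> {1,2,3} \<Longrightarrow> b \<in> {1,2,3} \<Longrightarrow> DD C (Xi C a \<otimes> Xi C b) = 0"
  shows "metric_compatible C"
proof -
  have "dd C (gm C t) = g1 C (DD C t)" for t
  proof (induction t rule: tensor_induct)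
    case zero
    then show ?case by simp
  next
    case (add s t)
    then show ?case by simp
  next
    case (basis f a b)
    then show ?case
      by (simp add: gm_lt gm_basis DD_lt_parallel parallel g1_twt of_real_def rw_one)
  qed
  then show ?thesis unfolding metric_compatible_def by blast
qed

lemma metric_compatible_if_trivial:
  assumes "c0 = 0" and "c1 = 0"
  shows "metric_compatible C"
  by (rule metric_compatible_if_basis_parallel) (simp add: DD_basis DXi_def assms)

end

theorem mainTheorem4:
  fixes C :: "('a::real_algebra_1, 'w::real_vector, 't::real_vector, 'u::real_vector) hcalc"
    and h c0 c1 :: real
  assumes "alg_ok C h" and "modules_ok C" and "calc_ok C h"
    and "sigma_ok C h" and "metric_ok C h"
    and "connection_ok C h c0 c1"
  shows "metric_compatible C \<longleftrightarrow> (c0 = 0 \<and> c1 = 0)"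
proof -
  interpret superplane_connection C h c0 c1
    using assms by unfold_locales
  show ?thesis
    using metric_compatible_imp_trivial metric_compatible_if_trivial by blast
qed

end
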